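(* The competitive ratio of the (offline-chosen) better algorithm between MTFO and MTFE is at least $1.75$ and at most $2$ (full cost model). That is: (i) for every list and every sequence $\sigma$, $\min\{\mathrm{MTFO}(\sigma),\mathrm{MTFE}(\sigma)\}\le 2\,\mathrm{OPT}(\sigma)$; and (ii) for every $c<1.75$ and every constant $b$ there exist a list and a sequence $\sigma$ with $\min\{\mathrm{MTFO}(\sigma),\mathrm{MTFE}(\sigma)\}>c\cdot\mathrm{OPT}(\sigma)+b$.
   Context: Static list update: a list of distinct items in some initial order; serving a request to the item at position $i$ (from the front) costs $i$ (full cost model); the accessed item may be moved closer to the front for free; two adjacent items may be swapped at cost $1$. $A(\sigma)$ is the total cost of algorithm $A$ and $\mathrm{OPT}(\sigma)$ the minimum cost of any offline algorithm from the same initial list. MTFO moves a requested item to the front on the 1st, 3rd, 5th, ... request to that item; MTFE on the 2nd, 4th, 6th, ... request; otherwise they leave it in place, and they make no paid exchanges. *)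

theory Defs
  imports Complex_Main
begin

text \<open>0-based position of an item in the list; serving it costs pos + 1.\<close>
fun pos :: "'a \<Rightarrow> 'a list \<Rightarrow> nat" where
  "pos x [] = 0"
| "pos x (y # ys) = (if x = y then 0 else Suc (pos x ys))"

definition mtf :: "'a \<Rightarrow> 'a list \<Rightarrow> 'a list" where
  "mtf x xs = x # remove1 x xs"

fun alg_cost :: "(nat \<Rightarrow> bool) \<Rightarrow> 'a list \<Rightarrow> 'a list \<Rightarrow> 'a list \<Rightarrow> nat" where
  "alg_cost P xs hist [] = 0"
| "alg_cost P xs hist (x # \<sigma>) =
     pos x xs + 1 +
     alg_cost P (if P (count_list hist x + 1) then mtf x xs else xs) (hist @ [x]) \<sigma>"

definition MTFO :: "'a list \<Rightarrow> 'a list \<Rightarrow> nat" where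
  "MTFO init \<sigma> = alg_cost odd init [] \<sigma>"

definition MTFE :: "'a list \<Rightarrow> 'a list \<Rightarrow> nat" where
  "MTFE init \<sigma> = alg_cost even init [] \<sigma>"

text \<open>Paid exchange of the adjacent positions j, j+1 (no-op if out of range; it still
  costs 1, which is a dominated action and does not affect the optimum).\<close>
definition swap_adj :: "nat \<Rightarrow> 'a list \<Rightarrow> 'a list" where
  "swap_adj j xs = (if Suc j < length xs then xs[j := xs ! Suc j, Suc j := xs ! j] else xs)"

definition move_fwd :: "'a \<Rightarrow> nat \<Rightarrow> 'a list \<Rightarrow> 'a list" where
  "move_fwd x k ys = (let zs = remove1 x ys in take k zs @ x # drop k zs)"

text \<open>Offline algorithm: for each request, an action (sw, k): first perform the paid
  adjacent exchanges sw (cost 1 each), then serve the request, then move the accessed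
  item forward for free to position min k (its position).\<close>
fun off_cost :: "'a list \<Rightarrow> 'a list \<Rightarrow> (nat list \<times> nat) list \<Rightarrow> nat" where
  "off_cost xs [] acts = 0"
| "off_cost xs (x # \<sigma>) [] = 0"
| "off_cost xs (x # \<sigma>) ((sw, k) # acts) =
     (let ys = fold swap_adj sw xs
      in length sw + pos x ys + 1 + off_cost (move_fwd x (min k (pos x ys)) ys) \<sigma> acts)"

definition OPT :: "'a list \<Rightarrow> 'a list \<Rightarrow> nat" where
  "OPT init \<sigma> = (INF acts \<in> {acts. length acts = length \<sigma>}. off_cost init \<sigma> acts)"

end

theory Submission
  imports Defs
begin

text \<open>
  Upper bound: a potential function argument. The potential sums, over ordered pairs \<open>(a, b)\<close>
  of items, a weight between 0 and 4 that depends on whether \<open>a\<close> precedes \<open>b\<close> in the lists of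
  MTFO, MTFE and the offline algorithm, and on the parities of the numbers of requests to \<open>a\<close> and
  \<open>b\<close> so far. A request served at offline cost \<open>c\<close> satisfies
  \<open>2 (MTFO + MTFE) + \<Delta>\<Phi> \<le> 8 c\<close>, and a paid exchange changes the order of a single pair, raising
  \<open>\<Phi>\<close> by at most 8. Since \<open>\<Phi>\<close> starts at 0, \<open>MTFO + MTFE \<le> 4 OPT\<close>.

  Lower bound: on the list \<open>[0, \<dots>, n-1]\<close> request \<open>0, \<dots>, n-1\<close>, then every item twice in the
  same order, then \<open>n-1, \<dots>, 0\<close>, then every item twice in that order. Both MTFO and MTFE pay
  \<open>(7n\<^sup>2 + 5n)/2\<close>, while moving an item to the front exactly on its doubled requests
  costs \<open>2n\<^sup>2 + 4n\<close>.
\<close>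

section \<open>Relative order of items in a list\<close>

lemma pos_less_length: "x \<in> set L \<Longrightarrow> pos x L < length L"
  by (induction L) auto

lemma pos_eq_length: "x \<notin> set L \<Longrightarrow> pos x L = length L"
  by (induction L) auto

lemma nth_pos: "x \<in> set L \<Longrightarrow> L ! pos x L = x"
  by (induction L) auto

lemma pos_nth: "distinct L \<Longrightarrow> i < length L \<Longrightarrow> pos (L ! i) L = i"
  by (induction L arbitrary: i) (auto simp: nth_Cons nth_mem split: nat.split)

lemma pos_eq_imp_eq: "x \<in> set L \<Longrightarrow> pos x L = pos y L \<Longrightarrow> x = y"
  by (metis nth_pos pos_less_length pos_eq_length less_irrefl)

lemma pos_append: "pos x (xs @ ys) = (if x \<in> set xs then pos x xs else length xs + pos x ys)"
  by (induction xs) auto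

lemma pos_remove1:
  "x \<in> set L \<Longrightarrow> y \<noteq> x \<Longrightarrow>
   pos y (remove1 x L) = (if pos y L < pos x L then pos y L else pos y L - 1)"
proof (induction L)
  case (Cons z L)
  then show ?case
    by (cases "x = z") (auto dest: pos_eq_imp_eq[of x L y])
qed simp

lemma pos_insert_at:
  "y \<noteq> x \<Longrightarrow> y \<in> set zs \<Longrightarrow>
   pos y (take k zs @ x # drop k zs) = (if pos y zs < k then pos y zs else Suc (pos y zs))"
proof (induction zs arbitrary: k)
  case (Cons z zs)
  then show ?case by (cases k) auto
qed simp

definition precedes :: "'a list \<Rightarrow> 'a \<Rightarrow> 'a \<Rightarrow> bool" where
  "precedes L a b \<longleftrightarrow> pos a L < pos b L"

lemma precedes_swap_iff:
  "a \<in> set L \<Longrightarrow> b \<in> set L \<Longrightarrow> a \<noteq> b \<Longrightarrow> precedes L b a \<longleftrightarrow> \<not> precedes L a b"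
  unfolding precedes_def by (metis pos_eq_imp_eq linorder_neq_iff less_asym)

lemma pos_eq_sum_precedes:
  "distinct L \<Longrightarrow> x \<in> set L \<Longrightarrow> pos x L = (\<Sum>y\<in>set L - {x}. of_bool (precedes L y x))"
proof (induction L)
  case Nil
  then show ?case by simp
next
  case (Cons z L)
  show ?case
  proof (cases "x = z")
    case True
    then show ?thesis by (simp add: precedes_def)
  next
    case False
    with Cons have x: "x \<in> set L" and z: "z \<notin> set L" by auto
    have "pos x (z # L) = 1 + (\<Sum>y\<in>set L - {x}. of_bool (precedes L y x))"
      using Cons x False by simp
    also have "\<dots> = of_bool (precedes (z # L) z x) + (\<Sum>y\<in>set L - {x}. of_bool (precedes (z # L) y x))"
      using False z by (intro arg_cong2[where f = "(+)"] sum.cong) (auto simp: precedes_def)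
    also have "\<dots> = (\<Sum>y\<in>set (z # L) - {x}. of_bool (precedes (z # L) y x))"
      using False z by (simp add: insert_Diff_if)
    finally show ?thesis .
  qed
qed

lemma set_move_fwd: "x \<in> set L \<Longrightarrow> set (move_fwd x k L) = set L"
proof -
  assume x: "x \<in> set L"
  have "set (move_fwd x k L) = insert x (set (remove1 x L))"
    using set_append[of "take k (remove1 x L)" "drop k (remove1 x L)"]
    by (auto simp: move_fwd_def Let_def)
  also have "\<dots> = set L"
    using x set_remove1_subset[of x L] in_set_remove1[of _ x L] by blast
  finally show ?thesis .
qed

lemma distinct_move_fwd: "distinct L \<Longrightarrow> distinct (move_fwd x k L)"
proof -
  assume "distinct L"
  then have "distinct (take k zs @ drop k zs)" "x \<notin> set (take k zs @ drop k zs)"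
    if "zs = remove1 x L" for zs
    using that by (simp_all add: distinct_remove1)
  then show ?thesis
    unfolding move_fwd_def Let_def distinct_append by (auto simp del: append_take_drop_id)
qed

lemma pos_move_fwd_other:
  assumes "x \<in> set L" "y \<in> set L" "y \<noteq> x"
  shows "pos y (move_fwd x k L) =
    (if pos y (remove1 x L) < k then pos y (remove1 x L) else Suc (pos y (remove1 x L)))"
  unfolding move_fwd_def Let_def using assms by (intro pos_insert_at) (auto simp: in_set_remove1)

lemma pos_move_fwd_le: "pos x (move_fwd x k L) \<le> k"
proof -
  have "pos x (take k zs) < length (take k zs)" if "x \<in> set (take k zs)" for zs :: "'a list"
    using that by (rule pos_less_length)
  then show ?thesis
    by (fastforce simp: move_fwd_def Let_def pos_append)
qed

lemma precedes_move_fwd: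
  assumes "x \<in> set L" "a \<in> set L" "b \<in> set L" "a \<noteq> x" "b \<noteq> x"
  shows "precedes (move_fwd x k L) a b = precedes L a b"
proof -
  have "pos a L \<noteq> pos x L" "pos b L \<noteq> pos x L"
    using assms pos_eq_imp_eq[of x L] by metis+
  then show ?thesis
    using assms by (auto simp: precedes_def pos_move_fwd_other pos_remove1)
qed

lemma precedes_move_fwd_moved:
  assumes "x \<in> set L" "y \<in> set L" "y \<noteq> x" "precedes L x y" "k \<le> pos x L"
  shows "precedes (move_fwd x k L) x y"
  using assms pos_move_fwd_le[of x k L]
  by (auto simp: precedes_def pos_move_fwd_other pos_remove1)

lemma mtf_eq_move_fwd: "mtf x L = move_fwd x 0 L"
  by (simp add: mtf_def move_fwd_def)

lemma set_mtf: "x \<in> set L \<Longrightarrow> set (mtf x L) = set L"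
  by (simp add: mtf_eq_move_fwd set_move_fwd)

lemma distinct_mtf: "distinct L \<Longrightarrow> distinct (mtf x L)"
  by (simp add: mtf_eq_move_fwd distinct_move_fwd)

lemma precedes_mtf:
  assumes "x \<in> set L" "a \<in> set L" "b \<in> set L" "a \<noteq> b"
  shows "precedes (mtf x L) a b \<longleftrightarrow> a = x \<or> b \<noteq> x \<and> precedes L a b"
proof (cases "a = x \<or> b = x")
  case True
  then show ?thesis using assms by (auto simp: precedes_def mtf_def)
next
  case False
  then show ?thesis using assms by (simp add: mtf_eq_move_fwd precedes_move_fwd)
qed

lemma set_swap_adj: "set (swap_adj j L) = set L"
  by (simp add: swap_adj_def)

lemma distinct_swap_adj: "distinct L \<Longrightarrow> distinct (swap_adj j L)"
  by (simp add: swap_adj_def)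

lemma precedes_swap_adj:
  assumes L: "distinct L" and ab: "a \<in> set L" "b \<in> set L" "{a, b} \<noteq> {L ! j, L ! Suc j}"
  shows "precedes (swap_adj j L) a b = precedes L a b"
proof (cases "Suc j < length L")
  case False
  then show ?thesis by (simp add: swap_adj_def)
next
  case True
  define t where "t i = (if i = j then Suc j else if i = Suc j then j else i)" for i
  have pos_swap: "pos c (swap_adj j L) = t (pos c L)" if "c \<in> set L" for c
  proof -
    have "swap_adj j L ! t (pos c L) = c" "t (pos c L) < length (swap_adj j L)"
      using True pos_less_length[OF that] nth_pos[OF that]
      by (auto simp: swap_adj_def t_def nth_list_update)
    then show ?thesis
      using pos_nth[OF distinct_swap_adj[OF L]] by metis
  qed
  have "\<not> (pos a L = j \<and> pos b L = Suc j)" "\<not> (pos a L = Suc j \<and> pos b L = j)"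
    using ab nth_pos[of a L] nth_pos[of b L] by auto
  then show ?thesis
    unfolding precedes_def pos_swap[OF ab(1)] pos_swap[OF ab(2)] by (auto simp: t_def)
qed

section \<open>The potential\<close>

definition pair_potential :: "bool \<Rightarrow> bool \<Rightarrow> bool \<Rightarrow> bool \<Rightarrow> bool \<Rightarrow> nat" where
  "pair_potential A B C p q =
     (if A = B then (if A = C then 0 else 4) else if p = q then 2 else if A = p then 1 else 4)"

lemma pair_potential_le: "pair_potential A B C p q \<le> 4"
  by (simp add: pair_potential_def)

text \<open>
  One request to \<open>x\<close> seen from the pair \<open>(x, y)\<close>: \<open>A, B, C\<close> tell whether \<open>x\<close> precedes \<open>y\<close>
  in the three lists, \<open>p, q\<close> whether \<open>x, y\<close> were requested an odd number of times. MTFO moves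
  \<open>x\<close> to the front iff \<open>\<not> p\<close>, MTFE iff \<open>p\<close>, and the offline algorithm keeps \<open>x\<close> ahead of \<open>y\<close>
  if it was (\<open>C \<longrightarrow> C'\<close>).
\<close>
lemma pair_potential_request:
  "C \<longrightarrow> C' \<Longrightarrow>
   2 * (of_bool (\<not> A) + of_bool (\<not> B))
     + pair_potential (\<not> p \<or> A) (p \<or> B) C' (\<not> p) q
     + pair_potential (\<not> (\<not> p \<or> A)) (\<not> (p \<or> B)) (\<not> C') q (\<not> p)
   \<le> 8 * of_bool (\<not> C) + pair_potential A B C p q + pair_potential (\<not> A) (\<not> B) (\<not> C) q p"
  by (cases A; cases B; cases C; cases C'; cases p; cases q) (simp_all add: pair_potential_def)

lemma sum_pairs_remove:
  assumes "finite S" "x \<in> S"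
  shows "(\<Sum>a\<in>S. \<Sum>b\<in>S - {a}. F a b) =
    (\<Sum>y\<in>S - {x}. F x y + F y x) + (\<Sum>a\<in>S - {x}. \<Sum>b\<in>S - {a} - {x}. F a b)"
proof -
  have "(\<Sum>b\<in>S - {a}. F a b) = F a x + (\<Sum>b\<in>S - {a} - {x}. F a b)" if "a \<in> S - {x}" for a
    using assms that by (subst sum.remove[of _ x]) auto
  then have "(\<Sum>a\<in>S - {x}. \<Sum>b\<in>S - {a}. F a b)
      = (\<Sum>a\<in>S - {x}. F a x + (\<Sum>b\<in>S - {a} - {x}. F a b))"
    by (intro sum.cong) auto
  moreover have "(\<Sum>a\<in>S. \<Sum>b\<in>S - {a}. F a b)
      = (\<Sum>b\<in>S - {x}. F x b) + (\<Sum>a\<in>S - {x}. \<Sum>b\<in>S - {a}. F a b)"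
    using assms by (simp add: sum.remove)
  ultimately show ?thesis by (simp add: sum.distrib ac_simps)
qed

lemma sum_pairs_mono_except:
  fixes F G :: "'a \<Rightarrow> 'a \<Rightarrow> nat"
  assumes S: "finite S"
    and le: "\<And>a b. a \<in> S \<Longrightarrow> b \<in> S \<Longrightarrow> {a, b} \<noteq> {u, v} \<Longrightarrow> G a b \<le> F a b"
    and bound: "\<And>a b. G a b \<le> M"
  shows "(\<Sum>a\<in>S. \<Sum>b\<in>S - {a}. G a b) \<le> (\<Sum>a\<in>S. \<Sum>b\<in>S - {a}. F a b) + 2 * M"
proof -
  define E where "E = {(u, v), (v, u)}"
  define P where "P = Sigma S (\<lambda>a. S - {a})"
  have fin: "finite P" using S by (simp add: P_def)
  have Sigma_eq: "(\<Sum>a\<in>S. \<Sum>b\<in>S - {a}. H a b) = (\<Sum>(a, b)\<in>P. H a b)"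
    for H :: "'a \<Rightarrow> 'a \<Rightarrow> nat"
    unfolding P_def by (rule sum.Sigma) (use S in auto)
  have pointwise: "G a b \<le> F a b + M * of_bool ((a, b) \<in> E)" if "(a, b) \<in> P" for a b
  proof (cases "(a, b) \<in> E")
    case True
    then show ?thesis using bound[of a b] by simp
  next
    case False
    then have "{a, b} \<noteq> {u, v}" by (auto simp: E_def doubleton_eq_iff)
    then show ?thesis using le that False by (simp add: P_def)
  qed
  have "(\<Sum>(a, b)\<in>P. G a b) \<le> (\<Sum>p\<in>P. (case p of (a, b) \<Rightarrow> F a b) + M * of_bool (p \<in> E))"
  proof (rule sum_mono)
    fix p assume "p \<in> P"
    then obtain a b where "p = (a, b)" "(a, b) \<in> P" by (cases p) auto
    then show "(case p of (a, b) \<Rightarrow> G a b) \<le> (case p of (a, b) \<Rightarrow> F a b) + M * of_bool (p \<in> E)"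
      using pointwise[of a b] by (simp only: prod.case)
  qed
  also have "\<dots> = (\<Sum>(a, b)\<in>P. F a b) + M * card (P \<inter> E)"
    using fin
    by (simp only: sum.distrib sum_distrib_left[symmetric] sum_of_bool_eq Collect_mem_eq of_nat_id)
  also have "\<dots> \<le> (\<Sum>(a, b)\<in>P. F a b) + M * 2"
  proof -
    have "card (P \<inter> E) \<le> card E" by (intro card_mono) (auto simp: E_def)
    also have "card E \<le> 2" unfolding E_def by (rule card_insert_le_m1) simp_all
    finally show ?thesis by simp
  qed
  finally show ?thesis
    by (simp only: Sigma_eq mult.commute)
qed

definition potential_term :: "'a list \<Rightarrow> 'a list \<Rightarrow> 'a list \<Rightarrow> 'a list \<Rightarrow> 'a \<Rightarrow> 'a \<Rightarrow> nat" where
  "potential_term Lodd Leven Lopt h a b =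
     pair_potential (precedes Lodd a b) (precedes Leven a b) (precedes Lopt a b)
       (odd (count_list h a)) (odd (count_list h b))"

definition potential :: "'a set \<Rightarrow> 'a list \<Rightarrow> 'a list \<Rightarrow> 'a list \<Rightarrow> 'a list \<Rightarrow> nat" where
  "potential S Lodd Leven Lopt h = (\<Sum>a\<in>S. \<Sum>b\<in>S - {a}. potential_term Lodd Leven Lopt h a b)"

lemma potential_initial: "potential S L L L [] = 0"
  by (simp add: potential_def potential_term_def pair_potential_def)

lemma potential_swap_adj:
  assumes "distinct L" "set L = S"
  shows "potential S Lodd Leven (swap_adj j L) h \<le> potential S Lodd Leven L h + 8"
proof -
  have "(\<Sum>a\<in>S. \<Sum>b\<in>S - {a}. potential_term Lodd Leven (swap_adj j L) h a b)
      \<le> (\<Sum>a\<in>S. \<Sum>b\<in>S - {a}. potential_term Lodd Leven L h a b) + 2 * 4"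
  proof (rule sum_pairs_mono_except[where u = "L ! j" and v = "L ! Suc j"])
    show "finite S" using assms by auto
    show "potential_term Lodd Leven (swap_adj j L) h a b \<le> potential_term Lodd Leven L h a b"
      if "a \<in> S" "b \<in> S" "{a, b} \<noteq> {L ! j, L ! Suc j}" for a b
      using that assms precedes_swap_adj[of L a b j] by (simp add: potential_term_def)
  qed (simp add: potential_term_def pair_potential_le)
  then show ?thesis by (simp add: potential_def)
qed

lemma set_fold_swap_adj: "set (fold swap_adj sw L) = set L"
  by (induction sw arbitrary: L) (simp_all add: set_swap_adj)

lemma distinct_fold_swap_adj: "distinct L \<Longrightarrow> distinct (fold swap_adj sw L)"
  by (induction sw arbitrary: L) (simp_all add: distinct_swap_adj)

lemma potential_fold_swap_adj:
  "distinct L \<Longrightarrow> set L = S \<Longrightarrow>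
   potential S Lodd Leven (fold swap_adj sw L) h \<le> potential S Lodd Leven L h + 8 * length sw"
proof (induction sw arbitrary: L)
  case (Cons j sw)
  have "potential S Lodd Leven (fold swap_adj sw (swap_adj j L)) h
      \<le> potential S Lodd Leven (swap_adj j L) h + 8 * length sw"
    using Cons by (simp add: distinct_swap_adj set_swap_adj)
  then show ?case using potential_swap_adj[OF Cons.prems, of Lodd Leven j h] by simp
qed simp

section \<open>Upper bound\<close>

definition alg_step :: "(nat \<Rightarrow> bool) \<Rightarrow> 'a list \<Rightarrow> 'a \<Rightarrow> 'a list \<Rightarrow> 'a list" where
  "alg_step P h x L = (if P (count_list h x + 1) then mtf x L else L)"

lemma alg_cost_Cons:
  "alg_cost P L h (x # \<sigma>) = pos x L + 1 + alg_cost P (alg_step P h x L) (h @ [x]) \<sigma>"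
  by (simp add: alg_step_def)

lemma set_alg_step: "x \<in> set L \<Longrightarrow> set (alg_step P h x L) = set L"
  by (simp add: alg_step_def set_mtf)

lemma distinct_alg_step: "distinct L \<Longrightarrow> distinct (alg_step P h x L)"
  by (simp add: alg_step_def distinct_mtf)

lemma precedes_alg_step_moved:
  "x \<in> set L \<Longrightarrow> y \<in> set L \<Longrightarrow> y \<noteq> x \<Longrightarrow>
   precedes (alg_step P h x L) x y \<longleftrightarrow> P (count_list h x + 1) \<or> precedes L x y"
  by (simp add: alg_step_def precedes_mtf)

lemma precedes_alg_step_other:
  "x \<in> set L \<Longrightarrow> a \<in> set L \<Longrightarrow> b \<in> set L \<Longrightarrow> a \<noteq> x \<Longrightarrow> b \<noteq> x \<Longrightarrow>
   precedes (alg_step P h x L) a b = precedes L a b"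
  by (simp add: alg_step_def mtf_eq_move_fwd precedes_move_fwd)

lemma potential_term_request_other:
  assumes "set Lodd = S" "set Leven = S" "set Lopt = S" "x \<in> S" "a \<in> S - {x}" "b \<in> S - {x}"
  shows "potential_term (alg_step odd h x Lodd) (alg_step even h x Leven) (move_fwd x k Lopt)
      (h @ [x]) a b = potential_term Lodd Leven Lopt h a b"
  using assms by (auto simp: potential_term_def precedes_alg_step_other precedes_move_fwd)

lemma potential_term_request:
  fixes h :: "'a list"
  assumes sets: "set Lodd = S" "set Leven = S" "set Lopt = S"
    and xy: "x \<in> S" "y \<in> S" "y \<noteq> x" and k: "k \<le> pos x Lopt"
  defines "F \<equiv> potential_term Lodd Leven Lopt h"
    and "F' \<equiv> potential_term (alg_step odd h x Lodd) (alg_step even h x Leven)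
      (move_fwd x k Lopt) (h @ [x])"
  shows "2 * (of_bool (precedes Lodd y x) + of_bool (precedes Leven y x)) + F' x y + F' y x
    \<le> 8 * of_bool (precedes Lopt y x) + F x y + F y x"
proof -
  define A where "A = precedes Lodd x y"
  define B where "B = precedes Leven x y"
  define C where "C = precedes Lopt x y"
  define C' where "C' = precedes (move_fwd x k Lopt) x y"
  define p where "p = odd (count_list h x)"
  define q where "q = odd (count_list h y)"
  have flip: "precedes L y x = (\<not> precedes L x y)" if "set L = S" for L :: "'a list"
    using that xy precedes_swap_iff[of x L y] by auto
  have "C \<longrightarrow> C'"
    using sets xy k precedes_move_fwd_moved[of x Lopt y k] by (simp add: C_def C'_def)
  then have "2 * (of_bool (\<not> A) + of_bool (\<not> B))
      + pair_potential (\<not> p \<or> A) (p \<or> B) C' (\<not> p) q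
      + pair_potential (\<not> (\<not> p \<or> A)) (\<not> (p \<or> B)) (\<not> C') q (\<not> p)
    \<le> 8 * of_bool (\<not> C) + pair_potential A B C p q + pair_potential (\<not> A) (\<not> B) (\<not> C) q p"
    by (rule pair_potential_request)
  then show ?thesis
    using sets xy
    by (simp add: F_def F'_def potential_term_def flip set_alg_step set_move_fwd
        precedes_alg_step_moved A_def B_def C_def C'_def p_def q_def)
qed

lemma potential_request:
  assumes dist: "distinct Lodd" "distinct Leven" "distinct Lopt"
    and sets: "set Lodd = S" "set Leven = S" "set Lopt = S"
    and x: "x \<in> S" and k: "k \<le> pos x Lopt"
  shows "2 * (pos x Lodd + 1 + (pos x Leven + 1))
      + potential S (alg_step odd h x Lodd) (alg_step even h x Leven) (move_fwd x k Lopt) (h @ [x])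
    \<le> 8 * (pos x Lopt + 1) + potential S Lodd Leven Lopt h"
proof -
  define F where "F = potential_term Lodd Leven Lopt h"
  define F' where "F' = potential_term (alg_step odd h x Lodd) (alg_step even h x Leven)
    (move_fwd x k Lopt) (h @ [x])"
  define R where "R = (\<Sum>a\<in>S - {x}. \<Sum>b\<in>S - {a} - {x}. F a b)"
  have fin: "finite S" using sets by auto
  have pos_sum: "pos x L = (\<Sum>y\<in>S - {x}. of_bool (precedes L y x))" if "distinct L" "set L = S" for L
    using pos_eq_sum_precedes[of L x] that x by simp
  have "(\<Sum>a\<in>S - {x}. \<Sum>b\<in>S - {a} - {x}. F' a b) = R"
    unfolding R_def F_def F'_def using sets x by (intro sum.cong) (auto simp: potential_term_request_other)
  then have "2 * (pos x Lodd + 1 + (pos x Leven + 1))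
      + potential S (alg_step odd h x Lodd) (alg_step even h x Leven) (move_fwd x k Lopt) (h @ [x])
    = 4 + (\<Sum>y\<in>S - {x}. 2 * (of_bool (precedes Lodd y x) + of_bool (precedes Leven y x))
            + F' x y + F' y x) + R"
    unfolding potential_def F'_def[symmetric] sum_pairs_remove[OF fin x] pos_sum[OF dist(1) sets(1)]
      pos_sum[OF dist(2) sets(2)]
    by (simp add: sum.distrib sum_distrib_left algebra_simps)
  also have "\<dots> \<le> 4 + (\<Sum>y\<in>S - {x}. 8 * of_bool (precedes Lopt y x) + F x y + F y x) + R"
  proof -
    have "(\<Sum>y\<in>S - {x}. 2 * (of_bool (precedes Lodd y x) + of_bool (precedes Leven y x))
            + F' x y + F' y x)
        \<le> (\<Sum>y\<in>S - {x}. 8 * of_bool (precedes Lopt y x) + F x y + F y x)"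
      unfolding F_def F'_def by (intro sum_mono) (blast intro: potential_term_request[OF sets x _ _ k])
    then show ?thesis by simp
  qed
  also have "\<dots> \<le> 8 * (pos x Lopt + 1) + potential S Lodd Leven Lopt h"
    unfolding potential_def F_def[symmetric] R_def sum_pairs_remove[OF fin x]
      pos_sum[OF dist(3) sets(3)]
    by (simp add: sum.distrib sum_distrib_left algebra_simps)
  finally show ?thesis .
qed

lemma off_cost_Cons:
  "off_cost L (x # \<sigma>) ((sw, k) # acts) =
     length sw + pos x (fold swap_adj sw L) + 1
     + off_cost (move_fwd x (min k (pos x (fold swap_adj sw L))) (fold swap_adj sw L)) \<sigma> acts"
  by (simp add: Let_def)

lemma amortized_bound:
  "distinct Lodd \<Longrightarrow> distinct Leven \<Longrightarrow> distinct Lopt \<Longrightarrow>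
   set Lodd = S \<Longrightarrow> set Leven = S \<Longrightarrow> set Lopt = S \<Longrightarrow> set \<sigma> \<subseteq> S \<Longrightarrow> length acts = length \<sigma> \<Longrightarrow>
   2 * (alg_cost odd Lodd h \<sigma> + alg_cost even Leven h \<sigma>)
     \<le> 8 * off_cost Lopt \<sigma> acts + potential S Lodd Leven Lopt h"
proof (induction \<sigma> arbitrary: Lodd Leven Lopt h acts)
  case (Cons x \<sigma>)
  obtain sw k acts' where acts: "acts = (sw, k) # acts'" and len: "length acts' = length \<sigma>"
    using Cons.prems(8) by (cases acts) auto
  define L where "L = fold swap_adj sw Lopt"
  define k' where "k' = min k (pos x L)"
  have L: "distinct L" "set L = S"
    using Cons.prems by (simp_all add: L_def distinct_fold_swap_adj set_fold_swap_adj)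
  have x: "x \<in> S" using Cons.prems(7) by simp
  have "2 * (alg_cost odd (alg_step odd h x Lodd) (h @ [x]) \<sigma>
        + alg_cost even (alg_step even h x Leven) (h @ [x]) \<sigma>)
      \<le> 8 * off_cost (move_fwd x k' L) \<sigma> acts'
         + potential S (alg_step odd h x Lodd) (alg_step even h x Leven) (move_fwd x k' L) (h @ [x])"
    using Cons.prems x L len
    by (intro Cons.IH) (simp_all add: distinct_alg_step distinct_move_fwd set_alg_step set_move_fwd)
  moreover have "2 * (pos x Lodd + 1 + (pos x Leven + 1))
      + potential S (alg_step odd h x Lodd) (alg_step even h x Leven) (move_fwd x k' L) (h @ [x])
    \<le> 8 * (pos x L + 1) + potential S Lodd Leven L h"
    using Cons.prems x L by (intro potential_request) (simp_all add: k'_def)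
  moreover have "potential S Lodd Leven L h \<le> potential S Lodd Leven Lopt h + 8 * length sw"
    unfolding L_def using Cons.prems by (intro potential_fold_swap_adj)
  ultimately show ?case
    unfolding acts alg_cost_Cons off_cost_Cons L_def[symmetric] k'_def[symmetric]
    by (simp add: algebra_simps)
qed simp

lemma OPT_attained: "\<exists>acts. length acts = length \<sigma> \<and> OPT init \<sigma> = off_cost init \<sigma> acts"
proof -
  have "(\<lambda>acts. off_cost init \<sigma> acts) ` {acts. length acts = length \<sigma>} \<noteq> {}"
    by (auto intro: exI[of _ "replicate (length \<sigma>) ([], 0)"])
  from Inf_nat_def1[OF this] show ?thesis
    unfolding OPT_def by auto
qed

lemma MTFO_plus_MTFE_le_OPT:
  assumes "distinct init" "set \<sigma> \<subseteq> set init"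
  shows "MTFO init \<sigma> + MTFE init \<sigma> \<le> 4 * OPT init \<sigma>"
proof -
  obtain acts where "length acts = length \<sigma>" and OPT: "OPT init \<sigma> = off_cost init \<sigma> acts"
    using OPT_attained by blast
  then have "2 * (MTFO init \<sigma> + MTFE init \<sigma>)
      \<le> 8 * OPT init \<sigma> + potential (set init) init init init []"
    unfolding MTFO_def MTFE_def OPT using assms by (intro amortized_bound) auto
  then show ?thesis by (simp add: potential_initial)
qed

section \<open>Lower bound\<close>

fun run_cost :: "'a list \<Rightarrow> ('a \<times> bool) list \<Rightarrow> nat" where
  "run_cost L [] = 0"
| "run_cost L ((x, b) # ds) = pos x L + 1 + run_cost (if b then mtf x L else L) ds"

fun run_list :: "'a list \<Rightarrow> ('a \<times> bool) list \<Rightarrow> 'a list" where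
  "run_list L [] = L"
| "run_list L ((x, b) # ds) = run_list (if b then mtf x L else L) ds"

lemma run_cost_append: "run_cost L (ds @ es) = run_cost L ds + run_cost (run_list L ds) es"
  by (induction L ds rule: run_cost.induct) auto

lemma run_list_append: "run_list L (ds @ es) = run_list (run_list L ds) es"
  by (induction L ds rule: run_cost.induct) auto

fun decisions :: "(nat \<Rightarrow> bool) \<Rightarrow> 'a list \<Rightarrow> 'a list \<Rightarrow> ('a \<times> bool) list" where
  "decisions P h [] = []"
| "decisions P h (x # \<sigma>) = (x, P (count_list h x + 1)) # decisions P (h @ [x]) \<sigma>"

lemma alg_cost_eq_run_cost: "alg_cost P L h \<sigma> = run_cost L (decisions P h \<sigma>)"
  by (induction \<sigma> arbitrary: L h) auto

lemma decisions_append: "decisions P h (\<sigma> @ \<tau>) = decisions P h \<sigma> @ decisions P (h @ \<sigma>) \<tau>"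
  by (induction \<sigma> arbitrary: h) auto

lemma count_list_distinct: "distinct xs \<Longrightarrow> x \<in> set xs \<Longrightarrow> count_list xs x = 1"
  by (induction xs) auto

definition double_each :: "'a list \<Rightarrow> 'a list" where
  "double_each xs = concat (map (\<lambda>x. [x, x]) xs)"

lemma count_list_double_each: "count_list (double_each xs) x = 2 * count_list xs x"
  by (induction xs) (auto simp: double_each_def)

lemma decisions_distinct:
  "distinct xs \<Longrightarrow> \<forall>x\<in>set xs. count_list h x = c \<Longrightarrow>
   decisions P h xs = map (\<lambda>x. (x, P (c + 1))) xs"
proof (induction xs arbitrary: h)
  case (Cons a xs)
  then have "\<forall>x\<in>set xs. count_list (h @ [a]) x = c" by auto
  with Cons show ?case by simp
qed simp

lemma decisions_double_each:
  "distinct xs \<Longrightarrow> \<forall>x\<in>set xs. count_list h x = c \<Longrightarrow>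
   decisions P h (double_each xs) = concat (map (\<lambda>x. [(x, P (c + 1)), (x, P (c + 2))]) xs)"
proof (induction xs arbitrary: h)
  case (Cons a xs)
  then have "\<forall>x\<in>set xs. count_list (h @ [a, a]) x = c" by auto
  with Cons show ?case by (simp add: double_each_def)
qed (simp add: double_each_def)

definition lower_bound_seq :: "nat \<Rightarrow> nat list" where
  "lower_bound_seq n = [0..<n] @ double_each [0..<n] @ rev [0..<n] @ double_each (rev [0..<n])"

lemma set_lower_bound_seq: "set (lower_bound_seq n) = set [0..<n]"
  by (auto simp: lower_bound_seq_def double_each_def)

lemma decisions_lower_bound_seq:
  "decisions P [] (lower_bound_seq n) =
     map (\<lambda>i. (i, P 1)) [0..<n]
     @ concat (map (\<lambda>i. [(i, P 2), (i, P 3)]) [0..<n])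
     @ map (\<lambda>i. (i, P 4)) (rev [0..<n])
     @ concat (map (\<lambda>i. [(i, P 5), (i, P 6)]) (rev [0..<n]))"
proof -
  define L where "L = [0..<n]"
  have L: "distinct L" "distinct (rev L)" by (simp_all add: L_def)
  have "count_list L i = 1" "count_list (double_each L) i = 2" if "i \<in> set L" for i
    using that L(1) by (simp_all add: count_list_double_each count_list_distinct)
  then show ?thesis
    unfolding lower_bound_seq_def L_def[symmetric]
    by (simp add: decisions_append decisions_distinct[OF L(1), where c = 0]
        decisions_double_each[OF L(1), where c = 1] decisions_distinct[OF L(2), where c = 3]
        decisions_double_each[OF L(2), where c = 4] numeral_eq_Suc del: upt_Suc)
qed

lemma run_mtf_each:
  "distinct (a @ b) \<Longrightarrow>
   2 * run_cost (rev a @ b) (map (\<lambda>i. (i, True)) b) = length b * (2 * length a + length b + 1)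
   \<and> run_list (rev a @ b) (map (\<lambda>i. (i, True)) b) = rev (a @ b)"
proof (induction b arbitrary: a)
  case (Cons y b)
  then have "y \<notin> set a" by auto
  then have "mtf y (rev a @ y # b) = rev (a @ [y]) @ b" "pos y (rev a @ y # b) = length a"
    by (simp_all add: mtf_def remove1_append pos_append)
  with Cons.IH[of "a @ [y]"] Cons.prems show ?case by (simp add: algebra_simps)
qed simp

lemma run_stay_each:
  "distinct (a @ b) \<Longrightarrow>
   2 * run_cost (a @ b) (map (\<lambda>i. (i, False)) b) = length b * (2 * length a + length b + 1)
   \<and> run_list (a @ b) (map (\<lambda>i. (i, False)) b) = a @ b"
proof (induction b arbitrary: a)
  case (Cons y b)
  then have "pos y (a @ y # b) = length a" by (simp add: pos_append)
  with Cons.IH[of "a @ [y]"] Cons.prems show ?case by (simp add: algebra_simps)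
qed simp

lemma run_mtf_then_any:
  "distinct (a @ b) \<Longrightarrow>
   2 * run_cost (rev a @ b) (concat (map (\<lambda>i. [(i, True), (i, e)]) b))
     = length b * (2 * length a + length b + 1) + 2 * length b
   \<and> run_list (rev a @ b) (concat (map (\<lambda>i. [(i, True), (i, e)]) b)) = rev (a @ b)"
proof (induction b arbitrary: a)
  case (Cons y b)
  then have "y \<notin> set a" by auto
  then have "mtf y (rev a @ y # b) = y # rev a @ b" "pos y (rev a @ y # b) = length a"
    by (simp_all add: mtf_def remove1_append pos_append)
  with Cons.IH[of "a @ [y]"] Cons.prems show ?case by (cases e) (simp_all add: mtf_def algebra_simps)
qed simp

lemma run_stay_then_mtf_rev:
  "distinct (c @ b) \<Longrightarrow>
   run_cost (c @ b) (concat (map (\<lambda>i. [(i, False), (i, True)]) (rev b))) = 2 * length b * length (c @ b)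
   \<and> run_list (c @ b) (concat (map (\<lambda>i. [(i, False), (i, True)]) (rev b))) = b @ c"
proof (induction b arbitrary: c rule: rev_induct)
  case (snoc y b)
  then have "y \<notin> set c" "y \<notin> set b" by auto
  then have "mtf y (c @ b @ [y]) = (y # c) @ b" "pos y (c @ b @ [y]) = length c + length b"
    by (simp_all add: mtf_def remove1_append pos_append)
  with snoc.IH[of "y # c"] snoc.prems show ?case by (simp add: algebra_simps)
qed simp

lemma MTFO_lower_bound_seq: "2 * MTFO [0..<n] (lower_bound_seq n) = 7 * n * n + 5 * n"
proof -
  define L where "L = [0..<n]"
  have L: "distinct L" "distinct (rev L)" "length L = n" by (simp_all add: L_def)
  show ?thesis
    unfolding MTFO_def alg_cost_eq_run_cost decisions_lower_bound_seq L_def[symmetric]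
    using run_mtf_each[of "[]" L] run_stay_then_mtf_rev[of "[]" "rev L"] run_stay_each[of "[]" "rev L"]
      run_mtf_then_any[of "[]" "rev L" False] L
    by (simp add: run_cost_append run_list_append algebra_simps)
qed

lemma MTFE_lower_bound_seq: "2 * MTFE [0..<n] (lower_bound_seq n) = 7 * n * n + 5 * n"
proof -
  define L where "L = [0..<n]"
  have L: "distinct L" "distinct (rev L)" "length L = n" by (simp_all add: L_def)
  show ?thesis
    unfolding MTFE_def alg_cost_eq_run_cost decisions_lower_bound_seq L_def[symmetric]
    using run_stay_each[of "[]" L] run_mtf_then_any[of "[]" L False] run_mtf_each[of "[]" "rev L"]
      run_stay_then_mtf_rev[of "[]" L] L
    by (simp add: run_cost_append run_list_append algebra_simps)
qed

lemma move_fwd_pos_id: "x \<in> set L \<Longrightarrow> move_fwd x (pos x L) L = L"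
proof -
  assume "x \<in> set L"
  then obtain a b where "L = a @ x # b" "x \<notin> set a"
    by (metis split_list_first)
  then show ?thesis by (simp add: move_fwd_def pos_append remove1_append)
qed

text \<open>The action \<open>([], N)\<close> with \<open>N \<ge> length L\<close> leaves the requested item in place.\<close>
lemma off_cost_run_cost:
  "distinct L \<Longrightarrow> length L \<le> N \<Longrightarrow> \<forall>(x, b)\<in>set ds. x \<in> set L \<Longrightarrow>
   off_cost L (map fst ds) (map (\<lambda>(x, b). ([], if b then 0 else N)) ds) = run_cost L ds"
proof (induction L ds rule: run_cost.induct)
  case (2 L x b ds)
  define L' where "L' = (if b then mtf x L else L)"
  from 2 have x: "x \<in> set L" by simp
  then have "move_fwd x (min (if b then 0 else N) (pos x L)) L = L'"
    using pos_less_length[of x L] 2(3)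
    by (auto simp: L'_def move_fwd_pos_id mtf_eq_move_fwd min_def)
  moreover have "distinct L'" "length L' \<le> N" "\<forall>(y, c)\<in>set ds. y \<in> set L'"
    using 2 x length_pos_if_in_set[OF x]
    by (auto simp: L'_def distinct_mtf set_mtf mtf_def length_remove1)
  ultimately show ?case
    using 2(1) by (simp add: Let_def flip: L'_def)
qed simp

lemma OPT_lower_bound_seq: "OPT [0..<n] (lower_bound_seq n) \<le> 2 * n * n + 4 * n"
proof -
  define L where "L = [0..<n]"
  have L: "distinct L" "distinct (rev L)" "length L = n" by (simp_all add: L_def)
  define ds where "ds = map (\<lambda>i. (i, False)) L @ concat (map (\<lambda>i. [(i, True), (i, True)]) L)
     @ map (\<lambda>i. (i, False)) (rev L) @ concat (map (\<lambda>i. [(i, True), (i, True)]) (rev L))"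
  define acts where "acts = map (\<lambda>(x, b). ([] :: nat list, if b then 0 else n)) ds"
  have seq: "map fst ds = lower_bound_seq n"
    by (simp add: ds_def lower_bound_seq_def L_def double_each_def map_concat comp_def del: upt_Suc)
  have "OPT L (lower_bound_seq n) \<le> off_cost L (lower_bound_seq n) acts"
    unfolding OPT_def by (rule cINF_lower) (simp_all add: acts_def flip: seq)
  also have "\<dots> = run_cost L ds"
    unfolding acts_def seq[symmetric] using L by (intro off_cost_run_cost) (auto simp: ds_def L_def)
  also have "2 * \<dots> = 4 * n * n + 8 * n"
    unfolding ds_def
    using run_stay_each[of "[]" L] run_mtf_then_any[of "[]" L True] run_stay_each[of "[]" "rev L"]
      run_mtf_then_any[of "[]" "rev L" True] L
    by (simp add: run_cost_append run_list_append algebra_simps)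
  finally show ?thesis by (simp add: L_def)
qed

lemma quadratic_eventually_exceeds:
  fixes d e b :: real
  assumes d: "d > 0"
  shows "\<exists>n::nat. b < d * real n ^ 2 + e * real n"
proof -
  define K where "K = \<bar>b\<bar> + \<bar>e\<bar> + 1"
  obtain n :: nat where n: "K / d < real n"
    using reals_Archimedean2 by blast
  have "0 < K / d" using d by (simp add: K_def)
  with n have "0 < real n" by linarith
  then have n1: "1 \<le> real n" by simp
  have "K < d * real n"
    using n d by (simp add: pos_divide_less_eq mult.commute)
  then have "K * real n \<le> d * real n * real n"
    using n1 by (intro mult_right_mono) auto
  moreover have "\<bar>b\<bar> \<le> \<bar>b\<bar> * real n"
    using n1 by (simp add: mult_le_cancel_left1)
  moreover have "- e * real n \<le> \<bar>e\<bar> * real n"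
    by (intro mult_right_mono) auto
  ultimately have "b < d * real n ^ 2 + e * real n"
    using n1 abs_ge_self[of b] unfolding K_def by (simp add: power2_eq_square algebra_simps)
  then show ?thesis ..
qed

lemma min_MTFO_MTFE_lower_bound_seq:
  fixes c b :: real
  assumes "c < 7 / 4"
  shows "\<exists>n. c * real (OPT [0..<n] (lower_bound_seq n)) + b
    < real (min (MTFO [0..<n] (lower_bound_seq n)) (MTFE [0..<n] (lower_bound_seq n)))"
proof -
  define c' where "c' = max c 0"
  have "0 < 7 / 2 - 2 * c'" using assms by (simp add: c'_def)
  then obtain n where n: "b < (7 / 2 - 2 * c') * real n ^ 2 + (5 / 2 - 4 * c') * real n"
    using quadratic_eventually_exceeds by blast
  have "c * real (OPT [0..<n] (lower_bound_seq n)) \<le> c' * real (OPT [0..<n] (lower_bound_seq n))"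
    by (intro mult_right_mono) (auto simp: c'_def)
  also have "\<dots> \<le> c' * (2 * real n ^ 2 + 4 * real n)"
    using OPT_lower_bound_seq[of n] by (intro mult_left_mono) (auto simp: c'_def power2_eq_square
        simp flip: of_nat_mult of_nat_add of_nat_le_iff)
  finally have "c * real (OPT [0..<n] (lower_bound_seq n)) + b < (7 * real n ^ 2 + 5 * real n) / 2"
    using n by (simp add: algebra_simps)
  also have "\<dots> = real (min (MTFO [0..<n] (lower_bound_seq n)) (MTFE [0..<n] (lower_bound_seq n)))"
    using MTFO_lower_bound_seq[of n] MTFE_lower_bound_seq[of n] by (simp add: power2_eq_square flip: of_nat_mult)
  finally show ?thesis ..
qed

theorem theorem6:
  shows "(\<forall>(init :: 'a list) \<sigma>. distinct init \<longrightarrow> set \<sigma> \<subseteq> set init \<longrightarrow>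
            min (MTFO init \<sigma>) (MTFE init \<sigma>) \<le> 2 * OPT init \<sigma>)
       \<and> (\<forall>c b :: real. c < 7/4 \<longrightarrow>
            (\<exists>(init :: nat list) \<sigma>. distinct init \<and> set \<sigma> \<subseteq> set init \<and>
               real (min (MTFO init \<sigma>) (MTFE init \<sigma>)) > c * real (OPT init \<sigma>) + b))"
proof (intro conjI allI impI)
  fix init \<sigma> :: "'a list"
  assume "distinct init" "set \<sigma> \<subseteq> set init"
  then have "MTFO init \<sigma> + MTFE init \<sigma> \<le> 4 * OPT init \<sigma>"
    by (rule MTFO_plus_MTFE_le_OPT)
  then show "min (MTFO init \<sigma>) (MTFE init \<sigma>) \<le> 2 * OPT init \<sigma>"
    by (simp add: min_def)
next
  fix c b :: real
  assume "c < 7/4"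
  then obtain n where "c * real (OPT [0..<n] (lower_bound_seq n)) + b
      < real (min (MTFO [0..<n] (lower_bound_seq n)) (MTFE [0..<n] (lower_bound_seq n)))"
    using min_MTFO_MTFE_lower_bound_seq by blast
  moreover have "distinct [0..<n]" "set (lower_bound_seq n) \<subseteq> set [0..<n]"
    by (simp_all add: set_lower_bound_seq)
  ultimately show "\<exists>(init :: nat list) \<sigma>. distinct init \<and> set \<sigma> \<subseteq> set init \<and>
      real (min (MTFO init \<sigma>) (MTFE init \<sigma>)) > c * real (OPT init \<sigma>) + b"
    by blast
qed

end
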